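(* Let $\alpha$ be a set and $\odot:\alpha\times\alpha\to\alpha$. Define on $\mathrm{Maybe}\,\alpha=\{\mathrm{Nothing}\}\cup\{\mathrm{Just}\,x : x\in\alpha\}$ the functions $\mathit{seq}':\mathrm{Maybe}\,\alpha\times\alpha\to\mathrm{Maybe}\,\alpha$ by $\mathit{seq}'(\mathrm{Nothing},y)=\mathrm{Just}\,y$, $\mathit{seq}'(\mathrm{Just}\,x,y)=\mathrm{Just}(x\odot y)$, and $\odot':\mathrm{Maybe}\,\alpha\times\mathrm{Maybe}\,\alpha\to\mathrm{Maybe}\,\alpha$ by $\mathrm{Nothing}\odot' y=y$, $x\odot'\mathrm{Nothing}=x$, $\mathrm{Just}\,x\odot'\mathrm{Just}\,y=\mathrm{Just}(x\odot y)$. Then calls $\mathrm{reduce}(\odot,\mathit{rdd})$ have deterministic outcomes if and only if calls $\mathrm{aggregate}(\mathrm{Nothing},\mathit{seq}',\odot',\mathit{rdd})$ have deterministic outcomes.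
   Context: Lists are finite; $\mathbin{+\!\!+}$ is concatenation. $\mathrm{foldl}(f,b,[\,])=b$, $\mathrm{foldl}(f,b,[x_1,\dots,x_n])=f(\cdots f(f(b,x_1),x_2)\cdots,x_n)$; for a nonempty list, $\mathrm{reducel}(f,[x_1,x_2,\dots,x_n])=\mathrm{foldl}(f,x_1,[x_2,\dots,x_n])$. An RDD is a list of lists. A partitioning is a function $P$ sending each list $L$ to an RDD obtained by splitting $L$ into consecutive pieces $p_1,\dots,p_n$ with $p_1\mathbin{+\!\!+}\cdots\mathbin{+\!\!+}p_n=L$ and then arbitrarily permuting $[p_1,\dots,p_n]$. $\mathrm{aggregate}_{\mathrm{det}}(z,\mathit{seq},\mathit{comb},[q_1,\dots,q_m])=\mathrm{foldl}(\mathit{comb},z,[\mathrm{foldl}(\mathit{seq},z,q_1),\dots,\mathrm{foldl}(\mathit{seq},z,q_m)])$; calls $\mathrm{aggregate}(z,\mathit{seq},\mathit{comb},\mathit{rdd})$ have deterministic outcomes if $\mathrm{aggregate}_{\mathrm{det}}(z,\mathit{seq},\mathit{comb},P(L))=\mathrm{foldl}(\mathit{seq},z,L)$ for all lists $L$ and partitionings $P$ (pieces possibly empty). $\mathrm{reduce}_{\mathrm{det}}(\odot,[q_1,\dots,q_m])=\mathrm{reducel}(\odot,[\mathrm{reducel}(\odot,q_1),\dots,\mathrm{reducel}(\odot,q_m)])$; calls $\mathrm{reduce}(\odot,\mathit{rdd})$ have deterministic outcomes if $\mathrm{reduce}_{\mathrm{det}}(\odot,P(L))=\mathrm{reducel}(\odot,L)$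 for all nonempty lists $L$ over $\alpha$ and all partitionings $P$ all of whose pieces are nonempty. *)

theory Defs
  imports Main "HOL-Library.Multiset"
begin

fun reducel :: "('a \<Rightarrow> 'a \<Rightarrow> 'a) \<Rightarrow> 'a list \<Rightarrow> 'a" where
  "reducel f (x # xs) = foldl f x xs"
| "reducel f [] = undefined"

text \<open>A partitioning: each list is split into consecutive pieces, which are then permuted.\<close>
definition is_partitioning :: "('a list \<Rightarrow> 'a list list) \<Rightarrow> bool" where
  "is_partitioning P \<longleftrightarrow> (\<forall>L. \<exists>ps. concat ps = L \<and> mset (P L) = mset ps)"

definition aggregate_det ::
  "'b \<Rightarrow> ('b \<Rightarrow> 'a \<Rightarrow> 'b) \<Rightarrow> ('b \<Rightarrow> 'b \<Rightarrow> 'b) \<Rightarrow> 'a list list \<Rightarrow> 'b" where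
  "aggregate_det z sq comb qs = foldl comb z (map (foldl sq z) qs)"

definition aggregate_deterministic ::
  "'b \<Rightarrow> ('b \<Rightarrow> 'a \<Rightarrow> 'b) \<Rightarrow> ('b \<Rightarrow> 'b \<Rightarrow> 'b) \<Rightarrow> bool" where
  "aggregate_deterministic z sq comb \<longleftrightarrow>
     (\<forall>(L :: 'a list) P. is_partitioning P \<longrightarrow> aggregate_det z sq comb (P L) = foldl sq z L)"

definition reduce_det :: "('a \<Rightarrow> 'a \<Rightarrow> 'a) \<Rightarrow> 'a list list \<Rightarrow> 'a" where
  "reduce_det f qs = reducel f (map (reducel f) qs)"

definition reduce_deterministic :: "('a \<Rightarrow> 'a \<Rightarrow> 'a) \<Rightarrow> bool" where
  "reduce_deterministic f \<longleftrightarrow>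
     (\<forall>(L :: 'a list) P. L \<noteq> [] \<longrightarrow> is_partitioning P \<longrightarrow>
        (\<forall>L'. \<forall>q \<in> set (P L'). q \<noteq> []) \<longrightarrow> reduce_det f (P L) = reducel f L)"

text \<open>Maybe = option: Nothing = None, Just = Some.\<close>
fun seq' :: "('a \<Rightarrow> 'a \<Rightarrow> 'a) \<Rightarrow> 'a option \<Rightarrow> 'a \<Rightarrow> 'a option" where
  "seq' f None y = Some y"
| "seq' f (Some x) y = Some (f x y)"

fun comb' :: "('a \<Rightarrow> 'a \<Rightarrow> 'a) \<Rightarrow> 'a option \<Rightarrow> 'a option \<Rightarrow> 'a option" where
  "comb' f None y = y"
| "comb' f x None = x"
| "comb' f (Some x) (Some y) = Some (f x y)"

end

theory Submission
  imports Defs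
begin

text \<open>Folding with \<open>seq'\<close> from \<open>None\<close> is \<open>reducel\<close> on nonempty lists, and folding with \<open>comb'\<close>
  ignores the \<open>None\<close> results. Hence the \<open>Maybe\<close>-aggregate of an RDD is exactly the reduce of the
  RDD with its empty pieces removed (or \<open>None\<close> if nothing is left). Removing empty pieces turns a
  partitioning into one with nonempty pieces, and a partitioning with nonempty pieces is left
  unchanged, so the two determinism conditions coincide.\<close>

lemma foldl_seq'_Some: "foldl (seq' f) (Some a) xs = Some (foldl f a xs)"
  by (induction xs arbitrary: a) auto

lemma foldl_seq'_None: "foldl (seq' f) None xs = (if xs = [] then None else Some (reducel f xs))"
  by (cases xs) (auto simp: foldl_seq'_Some)

lemma foldl_comb'_Some:
  "foldl (comb' f) (Some a) xs = Some (foldl f a (List.map_filter id xs))"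
  by (induction xs arbitrary: a) (auto simp: List.map_filter_simps split: option.split)

lemma foldl_comb'_None:
  "foldl (comb' f) None xs =
     (if List.map_filter id xs = [] then None else Some (reducel f (List.map_filter id xs)))"
proof (induction xs)
  case (Cons x xs)
  then show ?case by (cases x) (auto simp: List.map_filter_simps foldl_comb'_Some id_def)
qed (simp add: List.map_filter_simps)

lemma map_filter_foldl_seq'_None:
  "List.map_filter id (map (foldl (seq' f) None) qs) = map (reducel f) (filter (\<lambda>q. q \<noteq> []) qs)"
  by (induction qs) (auto simp: List.map_filter_simps foldl_seq'_None)

lemma concat_filter_nonempty: "concat (filter (\<lambda>q. q \<noteq> []) qs) = concat qs"
  by (induction qs) auto

lemma filter_nonempty_eq_Nil_iff: "filter (\<lambda>q. q \<noteq> []) qs = [] \<longleftrightarrow> concat qs = []"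
  by (induction qs) auto

lemma aggregate_det_seq'_comb':
  "aggregate_det None (seq' f) (comb' f) qs =
     (if concat qs = [] then None else Some (reduce_det f (filter (\<lambda>q. q \<noteq> []) qs)))"
  unfolding aggregate_det_def reduce_det_def
  by (simp add: foldl_comb'_None map_filter_foldl_seq'_None filter_nonempty_eq_Nil_iff)

lemma concat_partitioning_eq_Nil_iff:
  assumes "is_partitioning P"
  shows "concat (P L) = [] \<longleftrightarrow> L = []"
proof -
  obtain ps where ps: "concat ps = L" "mset (P L) = mset ps"
    using assms unfolding is_partitioning_def by blast
  then have "set (P L) = set ps"
    by (metis set_mset_mset)
  then show ?thesis
    by (simp add: ps(1)[symmetric])
qed

lemma is_partitioning_filter_nonempty:
  assumes "is_partitioning P"
  shows "is_partitioning (\<lambda>L. filter (\<lambda>q. q \<noteq> []) (P L))"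
  unfolding is_partitioning_def
proof
  fix L
  obtain ps where "concat ps = L" "mset (P L) = mset ps"
    using assms unfolding is_partitioning_def by blast
  then show "\<exists>ps. concat ps = L \<and> mset (filter (\<lambda>q. q \<noteq> []) (P L)) = mset ps"
    by (intro exI[of _ "filter (\<lambda>q. q \<noteq> []) ps"]) (simp add: concat_filter_nonempty)
qed

theorem lemma3:
  fixes f :: "'a \<Rightarrow> 'a \<Rightarrow> 'a"
  shows "reduce_deterministic f \<longleftrightarrow> aggregate_deterministic None (seq' f) (comb' f)"
proof
  assume R: "reduce_deterministic f"
  show "aggregate_deterministic None (seq' f) (comb' f)"
    unfolding aggregate_deterministic_def
  proof (intro allI impI)
    fix L :: "'a list" and P :: "'a list \<Rightarrow> 'a list list"
    assume P: "is_partitioning P"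
    have "reduce_det f (filter (\<lambda>q. q \<noteq> []) (P L)) = reducel f L" if "L \<noteq> []"
      using R that is_partitioning_filter_nonempty[OF P] unfolding reduce_deterministic_def
      by (elim allE[of _ L] allE[of _ "\<lambda>L. filter (\<lambda>q. q \<noteq> []) (P L)"]) auto
    then show "aggregate_det None (seq' f) (comb' f) (P L) = foldl (seq' f) None L"
      unfolding aggregate_det_seq'_comb' concat_partitioning_eq_Nil_iff[OF P]
      by (simp add: foldl_seq'_None)
  qed
next
  assume A: "aggregate_deterministic None (seq' f) (comb' f)"
  show "reduce_deterministic f"
    unfolding reduce_deterministic_def
  proof (intro allI impI)
    fix L :: "'a list" and P :: "'a list \<Rightarrow> 'a list list"
    assume "L \<noteq> []" and P: "is_partitioning P" and "\<forall>L'. \<forall>q\<in>set (P L'). q \<noteq> []"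
    moreover have "aggregate_det None (seq' f) (comb' f) (P L) = foldl (seq' f) None L"
      using A P unfolding aggregate_deterministic_def by blast
    ultimately show "reduce_det f (P L) = reducel f L"
      unfolding aggregate_det_seq'_comb' concat_partitioning_eq_Nil_iff[OF P]
      by (simp add: foldl_seq'_None filter_id_conv)
  qed
qed

end
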